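(* Let $v_1,\dots,v_{d+1}$ be the vertices of a $d$-simplex in $\mathbb R^d$ in general position. Then $$\sum_{\sigma\in\mathfrak S_d}\operatorname{sign}(\sigma)\,g_d(z(\sigma,1),z(\sigma,2),\dots,z(\sigma,d))=\frac{1}{d!}\det X(\mathbf 1,d),$$ where $\mathbf 1$ is the identity permutation.
   Context: Write $v_i=(x_{i,1},\dots,x_{i,d})$. $\pi^{(j)}$ forgets the last $j$ coordinates; the simplex is in general position if for every $0\le k\le d-1$ and every $(k+1)$-subset $U$ of its vertices, $\pi^{(d-k)}(\mathrm{conv}(U))$ is a $k$-simplex. For $\sigma\in\mathfrak S_d$, $1\le k\le d$: $X(\sigma,k)$ is the $(k+1)\times(k+1)$ matrix with rows $(1,x_{\sigma(r),1},\dots,x_{\sigma(r),k})$, $r=1,\dots,k$, and last row $(1,x_{d+1,1},\dots,x_{d+1,k})$; $Y(\sigma,k)$ is the $k\times k$ matrix with rows $(1,x_{\sigma(r),1},\dots,x_{\sigma(r),k-1})$, $r=1,\dots,k$; $z(\sigma,k)=\det X(\sigma,k)/\det Y(\sigma,k)$ (nonzero by general position). Let $B_k(x)$ be the Bernoulli polynomials and $P_k(x)=(B_{k+1}(x+1)-B_{k+1})/(k+1)$. Extended sum: for $h(s)=\sum_{k\ge0}h_ks^k$ with coefficients in a polynomial ring over $\mathbb R$ and upper limit $u$, $\sum_{s=1}^uh:=h_0u+\sum_{k\ge1}h_kP_k(u)$. $f_d(a_1,\dots,a_d)=\sum_{s_1=1}^{a_1}\sum_{s_2=1}^{a_2s_1}\cdots\sum_{s_d=1}^{a_ds_{d-1}}1$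 (extended sums, innermost first; a polynomial in the $a_i$), and $g_d(b_1,\dots,b_d)=f_d(b_1,b_2/b_1,\dots,b_d/b_{d-1})$ for nonzero reals $b_i$. *)

theory Defs
  imports "Jordan_Normal_Form.Determinant" "HOL-Computational_Algebra.Polynomial"
    "HOL-Combinatorics.Permutations"
begin

(* Bernoulli numbers, convention B_0 = 1, sum_{k=0}^{m} (m+1 choose k) B_k = 0 for m >= 1
   (so B_1 = -1/2). Only B_n for n >= 2 matter below. *)
function bernoulli_num :: "nat \<Rightarrow> real" where
  "bernoulli_num n =
     (if n = 0 then 1
      else - (1 / real (n + 1)) * (\<Sum>k<n. real ((n + 1) choose k) * bernoulli_num k))"
  by auto
termination by (relation "measure id") auto

definition bernoulli_poly :: "nat \<Rightarrow> real poly" where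
  "bernoulli_poly n = (\<Sum>k\<le>n. monom (real (n choose k) * bernoulli_num k) (n - k))"

definition P_poly :: "nat \<Rightarrow> real poly" where
  "P_poly k = smult (1 / real (k + 1))
      (pcompose (bernoulli_poly (Suc k)) [:1, 1:] - [:bernoulli_num (Suc k):])"

(* Extended sum  sum_{s=1}^{u} h := h_0 u + sum_{k>=1} h_k P_k(u),
   for h a polynomial in s and an upper limit u given as a polynomial in another variable;
   the result is a polynomial in that variable. *)
definition ext_sum :: "real poly \<Rightarrow> real poly \<Rightarrow> real poly" where
  "ext_sum h u = smult (coeff h 0) u + (\<Sum>k\<in>{1..degree h}. smult (coeff h k) (pcompose (P_poly k) u))"

(* f_iter a d m: the m innermost extended sums of f_d,
   sum_{s_{d-m+1}=1}^{a_{d-m+1} s_{d-m}} ... sum_{s_d=1}^{a_d s_{d-1}} 1,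
   as a polynomial in the variable s_{d-m}. *)
fun f_iter :: "(nat \<Rightarrow> real) \<Rightarrow> nat \<Rightarrow> nat \<Rightarrow> real poly" where
  "f_iter a d 0 = 1"
| "f_iter a d (Suc m) = ext_sum (f_iter a d m) [:0, a (d - m):]"

(* f_d(a_1,...,a_d), evaluated at reals a_1..a_d (a indexed from 1); the outermost
   upper limit a_1 equals a_1 * s_0 with s_0 = 1. *)
definition f_fun :: "nat \<Rightarrow> (nat \<Rightarrow> real) \<Rightarrow> real" where
  "f_fun d a = poly (f_iter a d d) 1"

definition g_fun :: "nat \<Rightarrow> (nat \<Rightarrow> real) \<Rightarrow> real" where
  "g_fun d b = f_fun d (\<lambda>i. if i = 1 then b 1 else b i / b (i - 1))"

(* points p_i (i in I), restricted to their first k coordinates (indexed 1..k),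
   form an affinely independent family in R^k *)
definition aff_indep_fam :: "nat \<Rightarrow> nat set \<Rightarrow> (nat \<Rightarrow> nat \<Rightarrow> real) \<Rightarrow> bool" where
  "aff_indep_fam k I p \<longleftrightarrow>
     (\<forall>c :: nat \<Rightarrow> real. (\<Sum>i\<in>I. c i) = 0 \<and> (\<forall>j\<in>{1..k}. (\<Sum>i\<in>I. c i * p i j) = 0)
        \<longrightarrow> (\<forall>i\<in>I. c i = 0))"

(* general position of the simplex with vertices x 1, ..., x (d+1) in R^d:
   for 0 <= k <= d-1 and every (k+1)-subset U of the vertices, the projection to the first
   k coordinates of conv U is a k-simplex, i.e. the projected vertices are affinely independent *)
definition general_position :: "nat \<Rightarrow> (nat \<Rightarrow> nat \<Rightarrow> real) \<Rightarrow> bool" where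
  "general_position d x \<longleftrightarrow>
     (\<forall>k<d. \<forall>U. U \<subseteq> {1..d+1} \<and> card U = k + 1 \<longrightarrow> aff_indep_fam k U x)"

(* X(sigma,k): (k+1)x(k+1), rows (1, x_{sigma(r),1..k}) for r = 1..k, last row (1, x_{d+1,1..k});
   0-based matrix indices *)
definition X_mat :: "nat \<Rightarrow> (nat \<Rightarrow> nat \<Rightarrow> real) \<Rightarrow> (nat \<Rightarrow> nat) \<Rightarrow> nat \<Rightarrow> real mat" where
  "X_mat d x \<sigma> k = mat (k + 1) (k + 1)
     (\<lambda>(r, c). if c = 0 then 1 else if r < k then x (\<sigma> (r + 1)) c else x (d + 1) c)"

definition Y_mat :: "(nat \<Rightarrow> nat \<Rightarrow> real) \<Rightarrow> (nat \<Rightarrow> nat) \<Rightarrow> nat \<Rightarrow> real mat" where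
  "Y_mat x \<sigma> k = mat k k (\<lambda>(r, c). if c = 0 then 1 else x (\<sigma> (r + 1)) c)"

definition z_val :: "nat \<Rightarrow> (nat \<Rightarrow> nat \<Rightarrow> real) \<Rightarrow> (nat \<Rightarrow> nat) \<Rightarrow> nat \<Rightarrow> real" where
  "z_val d x \<sigma> k = det (X_mat d x \<sigma> k) / det (Y_mat x \<sigma> k)"

end

theory Submission
  imports Defs
begin

text \<open>
  Induction on \<open>d\<close>, for the left-hand side with all arguments of \<open>g\<^sub>d\<close> scaled by some
  \<open>l \<noteq> 0\<close>, which then equals \<open>l\<^sup>d det X(1, d) / d!\<close>.
  Group the permutations by \<open>i = \<sigma>(1)\<close>. Then \<open>z(\<sigma>, 1) = W\<^sub>i = x\<^sub>d\<^sub>+\<^sub>1\<^sub>,\<^sub>1 - x\<^sub>i\<^sub>,\<^sub>1\<close>, and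
  eliminating the first coordinate in \<open>X(\<sigma>, k + 1)\<close> and \<open>Y(\<sigma>, k + 1)\<close> with the row of \<open>v\<^sub>i\<close>
  shows that \<open>z(\<sigma>, k + 1)\<close> is the corresponding \<open>z\<close> of the \<open>(d - 1)\<close>-simplex cut out of the
  edges at \<open>v\<^sub>i\<close> by the hyperplane through \<open>v\<^sub>d\<^sub>+\<^sub>1\<close> orthogonal to the first axis.
  So, as a polynomial in the outermost summation variable \<open>s\<close>, the signed sum of the inner
  \<open>d - 1\<close> extended sums is an instance of the induction hypothesis at \<open>l = s / W\<^sub>i\<close>, i.e. a
  monomial \<open>c\<^sub>i s\<^sup>d\<^sup>-\<^sup>1\<close>, and the outermost extended sum turns it into \<open>c\<^sub>i P\<^sub>d\<^sub>-\<^sub>1(l W\<^sub>i)\<close>.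
  Comparing the two eliminations for \<open>\<sigma>(1) = i\<close> gives
  \<open>c\<^sub>i = det X(1, d) / ((d - 1)! W\<^sub>i \<Prod>\<^sub>j\<^sub>\<noteq>\<^sub>i (W\<^sub>i - W\<^sub>j))\<close>, and the Lagrange interpolation
  identity \<open>\<Sum>\<^sub>i W\<^sub>i\<^sup>m / \<Prod>\<^sub>j\<^sub>\<noteq>\<^sub>i (W\<^sub>i - W\<^sub>j) = [m = d - 1]\<close> for \<open>m < d\<close> leaves only the leading
  coefficient \<open>1 / d\<close> of \<open>P\<^sub>d\<^sub>-\<^sub>1\<close>.
\<close>

section \<open>Bernoulli polynomials and the extended sum\<close>

lemma bernoulli_num_binomial_sum:
  assumes "n \<ge> 2"
  shows "(\<Sum>k<n. real (n choose k) * bernoulli_num k) = 0"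
proof -
  obtain m where n: "n = Suc m" and m: "m \<ge> 1" using assms by (cases n) auto
  have B: "bernoulli_num m = - (1 / real (m + 1)) * (\<Sum>k<m. real ((m + 1) choose k) * bernoulli_num k)"
    using m by (subst bernoulli_num.simps) simp
  have "(\<Sum>k<n. real (n choose k) * bernoulli_num k)
      = (\<Sum>k<m. real ((m + 1) choose k) * bernoulli_num k) + real (m + 1) * bernoulli_num m"
    by (simp add: n)
  also have "\<dots> = 0" unfolding B by (simp add: field_simps)
  finally show ?thesis .
qed

lemma coeff_bernoulli_poly:
  "coeff (bernoulli_poly n) j = (if j \<le> n then real (n choose (n - j)) * bernoulli_num (n - j) else 0)"
proof -
  have "coeff (bernoulli_poly n) j = (\<Sum>k\<le>n. if k = n - j \<and> j \<le> n then real (n choose k) * bernoulli_num k else 0)"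
    unfolding bernoulli_poly_def coeff_sum coeff_monom by (intro sum.cong) auto
  then show ?thesis by (simp add: sum.delta)
qed

lemma lead_coeff_bernoulli_poly: "coeff (bernoulli_poly n) n = 1"
  by (simp add: coeff_bernoulli_poly)

lemma degree_bernoulli_poly: "degree (bernoulli_poly n) = n"
proof (rule antisym)
  show "degree (bernoulli_poly n) \<le> n"
    by (rule degree_le) (simp add: coeff_bernoulli_poly)
  show "n \<le> degree (bernoulli_poly n)"
    by (rule le_degree) (simp add: lead_coeff_bernoulli_poly)
qed

lemma poly_bernoulli_poly_1:
  assumes "n \<ge> 2"
  shows "poly (bernoulli_poly n) 1 = bernoulli_num n"
proof -
  have "poly (bernoulli_poly n) 1 = (\<Sum>k<n. real (n choose k) * bernoulli_num k) + bernoulli_num n"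
    by (simp add: bernoulli_poly_def poly_sum poly_monom lessThan_Suc_atMost[symmetric])
  then show ?thesis using bernoulli_num_binomial_sum[OF assms] by simp
qed

lemma coeff_0_P_poly:
  assumes "k \<ge> 1"
  shows "coeff (P_poly k) 0 = 0"
  using poly_bernoulli_poly_1[of "Suc k"] assms
  by (simp add: poly_0_coeff_0[symmetric] P_poly_def poly_pcompose)

lemma degree_P_poly_le: "degree (P_poly k) \<le> Suc k"
proof -
  have "degree (pcompose (bernoulli_poly (Suc k)) [:1, 1:]) = Suc k"
    by (simp add: degree_pcompose degree_bernoulli_poly)
  then have "degree (pcompose (bernoulli_poly (Suc k)) [:1, 1:] - [:bernoulli_num (Suc k):]) \<le> Suc k"
    by (intro degree_le) (auto simp: coeff_eq_0)
  then show ?thesis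
    unfolding P_poly_def using degree_smult_le order_trans by blast
qed

lemma lead_coeff_P_poly: "coeff (P_poly k) (Suc k) = 1 / real (Suc k)"
proof -
  have "lead_coeff (pcompose (bernoulli_poly (Suc k)) [:1, 1:]) = 1"
    by (simp add: lead_coeff_comp degree_bernoulli_poly lead_coeff_bernoulli_poly)
  then show ?thesis
    by (simp add: P_poly_def degree_pcompose degree_bernoulli_poly)
qed

lemma poly_P_poly:
  assumes "k \<ge> 1"
  shows "poly (P_poly k) u = (\<Sum>j\<in>{1..Suc k}. coeff (P_poly k) j * u ^ j)"
proof -
  have "poly (P_poly k) u = (\<Sum>j\<le>Suc k. coeff (P_poly k) j * u ^ j)"
    unfolding poly_altdef using degree_P_poly_le[of k]
    by (intro sum.mono_neutral_left) (auto simp: coeff_eq_0)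
  also have "{..Suc k} = insert 0 {1..Suc k}" by auto
  finally show ?thesis by (simp add: coeff_0_P_poly[OF assms])
qed

lemma ext_sum_bounded:
  assumes "degree h \<le> N"
  shows "ext_sum h u = smult (coeff h 0) u + (\<Sum>k\<in>{1..N}. smult (coeff h k) (pcompose (P_poly k) u))"
  unfolding ext_sum_def
  by (rule arg_cong[where f = "\<lambda>t. _ + t"], rule sum.mono_neutral_left)
     (use assms in \<open>auto simp: coeff_eq_0\<close>)

lemma ext_sum_0 [simp]: "ext_sum 0 u = 0"
  by (simp add: ext_sum_def)

lemma ext_sum_add: "ext_sum (p + q) u = ext_sum p u + ext_sum q u"
proof -
  define N where "N = max (degree p) (degree q)"
  have "degree (p + q) \<le> N" unfolding N_def by (rule degree_add_le_max)
  then show ?thesis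
    by (simp add: ext_sum_bounded[of _ N] N_def smult_add_left sum.distrib algebra_simps)
qed

lemma smult_sum_right: "smult c (\<Sum>a\<in>A. p a) = (\<Sum>a\<in>A. smult c (p a))"
  by (induction A rule: infinite_finite_induct) (simp_all add: smult_add_right)

lemma ext_sum_smult: "ext_sum (smult c p) u = smult c (ext_sum p u)"
  by (simp add: ext_sum_bounded[OF degree_smult_le] ext_sum_bounded[OF order.refl]
      smult_add_right smult_sum_right mult.commute)

lemma ext_sum_sum: "ext_sum (\<Sum>a\<in>A. h a) u = (\<Sum>a\<in>A. ext_sum (h a) u)"
  by (induction A rule: infinite_finite_induct) (simp_all add: ext_sum_add)

lemma ext_sum_monom:
  assumes "n \<ge> 1"
  shows "ext_sum (monom c n) u = smult c (pcompose (P_poly n) u)"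
proof -
  have "ext_sum (monom c n) u = (\<Sum>k\<in>{1..n}. smult (coeff (monom c n) k) (pcompose (P_poly k) u))"
    using assms by (simp add: ext_sum_bounded[OF degree_monom_le])
  also have "\<dots> = (\<Sum>k\<in>{1..n}. if k = n then smult c (pcompose (P_poly k) u) else 0)"
    by (intro sum.cong) (auto simp: coeff_monom)
  finally show ?thesis using assms by (simp add: sum.delta)
qed

lemma poly_ext_sum_scaled_limit: "poly (ext_sum h [:0, c * s:]) 1 = poly (ext_sum h [:0, c:]) s"
  by (simp add: ext_sum_def poly_sum poly_pcompose mult.commute)

section \<open>The functions \<open>f\<^sub>d\<close> and \<open>g\<^sub>d\<close>\<close>

lemma f_iter_cong:
  assumes "m \<le> n" "\<And>j. n - m < j \<Longrightarrow> j \<le> n \<Longrightarrow> a j = b j"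
  shows "f_iter a n m = f_iter b n m"
  using assms by (induction m) auto

lemma f_iter_shift: "m \<le> n \<Longrightarrow> f_iter a (Suc n) m = f_iter (\<lambda>j. a (Suc j)) n m"
  by (induction m) (simp_all add: Suc_diff_le)

lemma f_fun_Suc: "f_fun (Suc n) a = poly (ext_sum (f_iter (\<lambda>j. a (Suc j)) n n) [:0, a 1:]) 1"
  by (simp add: f_fun_def f_iter_shift)

lemma poly_f_iter:
  assumes "n \<ge> 1"
  shows "poly (f_iter a n n) s = f_fun n (a(1 := s * a 1))"
proof -
  obtain m where n: "n = Suc m" using assms by (cases n) auto
  have "f_iter (a(1 := s * a 1)) n m = f_iter a n m"
    by (rule f_iter_cong) (auto simp: n)
  then have "f_fun n (a(1 := s * a 1)) = poly (ext_sum (f_iter a n m) [:0, a 1 * s:]) 1"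
    by (simp add: f_fun_def n mult.commute)
  also have "\<dots> = poly (f_iter a n n) s"
    by (simp add: poly_ext_sum_scaled_limit n)
  finally show ?thesis ..
qed

lemma g_fun_cong:
  assumes "\<And>k. k \<in> {1..n} \<Longrightarrow> b k = b' k"
  shows "g_fun n b = g_fun n b'"
  unfolding g_fun_def f_fun_def
proof (rule arg_cong[where f = "\<lambda>p. poly p 1"], rule f_iter_cong)
  fix j assume j: "n - n < j" "j \<le> n"
  show "(if j = 1 then b 1 else b j / b (j - 1)) = (if j = 1 then b' 1 else b' j / b' (j - 1))"
  proof (cases "j = 1")
    case False
    then have "j \<in> {1..n}" "j - 1 \<in> {1..n}" using j by auto
    then show ?thesis using assms by simp
  qed (use assms j in simp)
qed simp

lemma g_fun_Suc_scaled:
  assumes "l \<noteq> 0"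
  shows "g_fun (Suc n) (\<lambda>k. l * z k)
    = poly (ext_sum (f_iter (\<lambda>j. z (Suc j) / z j) n n) [:0, l * z 1:]) 1"
proof -
  define a where "a j = (if j = 1 then l * z 1 else l * z j / (l * z (j - 1)))" for j
  have "g_fun (Suc n) (\<lambda>k. l * z k) = poly (ext_sum (f_iter (\<lambda>j. a (Suc j)) n n) [:0, a 1:]) 1"
    by (simp add: g_fun_def a_def f_fun_Suc)
  also have "f_iter (\<lambda>j. a (Suc j)) n n = f_iter (\<lambda>j. z (Suc j) / z j) n n"
    by (rule f_iter_cong) (use assms in \<open>auto simp: a_def\<close>)
  finally show ?thesis by (simp add: a_def)
qed

lemma poly_f_iter_ratios:
  assumes "n \<ge> 1" "s \<noteq> 0" "z 1 \<noteq> 0"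
  shows "poly (f_iter (\<lambda>j. z (Suc j) / z j) n n) s = g_fun n (\<lambda>k. s / z 1 * z (Suc k))"
proof -
  have "poly (f_iter (\<lambda>j. z (Suc j) / z j) n n) s
      = f_fun n ((\<lambda>j. z (Suc j) / z j)(1 := s * (z (Suc 1) / z 1)))"
    using poly_f_iter[OF assms(1), of "\<lambda>j. z (Suc j) / z j"] by simp
  also have "\<dots> = g_fun n (\<lambda>k. s / z 1 * z (Suc k))"
    unfolding g_fun_def f_fun_def
    by (rule arg_cong[where f = "\<lambda>p. poly p 1"], rule f_iter_cong)
       (use assms in \<open>auto simp: mult_divide_mult_cancel_left_if\<close>)
  finally show ?thesis .
qed

section \<open>Polynomial identities\<close>

lemma poly_eqI_nonzero:
  fixes p q :: "'a :: {idom, ring_char_0} poly"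
  assumes "\<And>s. s \<noteq> 0 \<Longrightarrow> poly p s = poly q s"
  shows "p = q"
proof (rule ccontr)
  assume "p \<noteq> q"
  then have "finite {s. poly (p - q) s = 0}" by (intro poly_roots_finite) simp
  moreover have "- {0} \<subseteq> {s. poly (p - q) s = 0}" using assms by auto
  ultimately have "finite (- {0 :: 'a})" by (rule finite_subset[rotated])
  then show False by (simp add: infinite_UNIV_char_0)
qed

lemma sum_power_div_prod_diff:
  fixes f :: "'a \<Rightarrow> 'b :: field"
  assumes fin: "finite W" and inj: "inj_on f W" and m: "m < card W"
  shows "(\<Sum>i\<in>W. f i ^ m / (\<Prod>j\<in>W - {i}. (f i - f j))) = (if m = card W - 1 then 1 else 0)"
proof -
  \<comment> \<open>The Lagrange interpolant of \<open>X ^ m\<close> at the nodes \<open>f ` W\<close> is \<open>X ^ m\<close> itself;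
    compare the coefficients of \<open>X ^ (card W - 1)\<close>.\<close>
  define K where "K = card W - 1"
  have card_W: "card W = Suc K" using m unfolding K_def by simp
  define c where "c i = f i ^ m / (\<Prod>j\<in>W - {i}. (f i - f j))" for i
  define L where "L = (\<Sum>i\<in>W. smult (c i) (\<Prod>j\<in>W - {i}. [:- f j, 1:]))"
  have nz: "(\<Prod>j\<in>W - {i}. (f i - f j)) \<noteq> 0" if "i \<in> W" for i
    using inj that fin by (auto simp: inj_on_def)
  have deg: "degree (\<Prod>j\<in>W - {i}. [:- f j, 1:]) = K" if "i \<in> W" for i
    using fin that card_W by (simp add: degree_prod_sum_eq card_Diff_singleton)
  have lead: "coeff (\<Prod>j\<in>W - {i}. [:- f j, 1:]) K = 1" if "i \<in> W" for i
    using lead_coeff_prod[of "\<lambda>j. [:- f j, 1:]" "W - {i}"] deg[OF that] by simp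
  have degL: "degree L \<le> K"
    unfolding L_def by (rule degree_sum_le) (use deg fin in \<open>auto intro: order_trans[OF degree_smult_le]\<close>)
  have poly_L: "poly L (f k) = f k ^ m" if k: "k \<in> W" for k
  proof -
    have "poly L (f k) = (\<Sum>i\<in>W. c i * (\<Prod>j\<in>W - {i}. (f k - f j)))"
      unfolding L_def by (simp add: poly_sum poly_prod)
    also have "\<dots> = (\<Sum>i\<in>W. if i = k then c k * (\<Prod>j\<in>W - {k}. (f k - f j)) else 0)"
      using k fin by (intro sum.cong refl) (auto intro: prod_zero)
    also have "\<dots> = f k ^ m" using k fin nz[OF k] by (simp add: c_def)
    finally show ?thesis .
  qed
  have "L = monom 1 m"
    by (rule poly_eqI_degree[of "f ` W"])
       (use poly_L degL card_W m card_image[OF inj] in \<open>auto simp: poly_monom degree_monom_eq\<close>)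
  then have "coeff L K = (if m = K then 1 else 0)" by (simp add: coeff_monom)
  moreover have "coeff L K = (\<Sum>i\<in>W. c i)"
    unfolding L_def coeff_sum coeff_smult by (simp add: lead)
  ultimately show ?thesis unfolding c_def K_def by simp
qed

lemma sum_P_poly_div_prod_diff:
  fixes W :: "'a \<Rightarrow> real"
  assumes fin: "finite I" and card: "card I = Suc n" and n: "n \<ge> 1"
    and inj: "inj_on W I" and nz: "\<And>i. i \<in> I \<Longrightarrow> W i \<noteq> 0"
  shows "(\<Sum>i\<in>I. poly (P_poly n) (l * W i) / (W i * (\<Prod>j\<in>I - {i}. (W i - W j))))
    = l ^ Suc n / Suc n"
proof -
  define p where "p m = coeff (P_poly n) m" for m
  define D where "D i = (\<Prod>j\<in>I - {i}. (W i - W j))" for i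
  have "(\<Sum>i\<in>I. poly (P_poly n) (l * W i) / (W i * D i))
      = (\<Sum>i\<in>I. \<Sum>m\<in>{1..Suc n}. p m * l ^ m * (W i ^ (m - 1) / D i))"
  proof (intro sum.cong refl)
    fix i assume i: "i \<in> I"
    have "poly (P_poly n) (l * W i) / (W i * D i) = (\<Sum>m\<in>{1..Suc n}. p m * ((l * W i) ^ m / (W i * D i)))"
      unfolding poly_P_poly[OF n] p_def sum_divide_distrib by (simp only: times_divide_eq_right)
    also have "\<dots> = (\<Sum>m\<in>{1..Suc n}. p m * l ^ m * (W i ^ (m - 1) / D i))"
    proof (intro sum.cong refl)
      fix m :: nat assume "m \<in> {1..Suc n}"
      then obtain m' where "m = Suc m'" by (cases m) auto
      then show "p m * ((l * W i) ^ m / (W i * D i)) = p m * l ^ m * (W i ^ (m - 1) / D i)"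
        using nz[OF i] by (simp add: power_mult_distrib)
    qed
    finally show "poly (P_poly n) (l * W i) / (W i * D i) = (\<Sum>m\<in>{1..Suc n}. p m * l ^ m * (W i ^ (m - 1) / D i))" .
  qed
  also have "\<dots> = (\<Sum>m\<in>{1..Suc n}. p m * l ^ m * (\<Sum>i\<in>I. W i ^ (m - 1) / D i))"
    by (subst sum.swap) (simp add: sum_distrib_left)
  also have "\<dots> = (\<Sum>m\<in>{1..Suc n}. if m = Suc n then p m * l ^ m else 0)"
    using sum_power_div_prod_diff[OF fin inj] card by (intro sum.cong refl) (auto simp: D_def split: if_splits)
  also have "\<dots> = l ^ Suc n / Suc n"
    by (simp add: p_def lead_coeff_P_poly)
  finally show ?thesis by (simp add: D_def)
qed

section \<open>Determinants of affine point matrices\<close>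

definition affine_mat :: "nat \<Rightarrow> (nat \<Rightarrow> nat \<Rightarrow> real) \<Rightarrow> real mat" where
  "affine_mat m u = mat m m (\<lambda>(r, c). if c = 0 then 1 else u r c)"

lemma affine_mat_carrier [simp]: "affine_mat m u \<in> carrier_mat m m"
  and dim_row_affine_mat [simp]: "dim_row (affine_mat m u) = m"
  and dim_col_affine_mat [simp]: "dim_col (affine_mat m u) = m"
  by (simp_all add: affine_mat_def)

lemma index_affine_mat [simp]:
  "r < m \<Longrightarrow> c < m \<Longrightarrow> affine_mat m u $$ (r, c) = (if c = 0 then 1 else u r c)"
  by (simp add: affine_mat_def)

lemma X_mat_eq_affine_mat:
  "X_mat d x \<sigma> k = affine_mat (Suc k) (\<lambda>r. if r < k then x (\<sigma> (Suc r)) else x (Suc d))"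
  by (rule eq_matI) (auto simp: X_mat_def affine_mat_def)

lemma Y_mat_eq_affine_mat: "Y_mat x \<sigma> k = affine_mat k (\<lambda>r. x (\<sigma> (Suc r)))"
  by (rule eq_matI) (auto simp: Y_mat_def affine_mat_def)

lemma det_affine_mat_1 [simp]: "det (affine_mat 1 u) = 1"
  by (simp add: det_single affine_mat_def)

lemma det_affine_mat_scale_rows:
  "det (affine_mat (Suc m) (\<lambda>r c. if r = 0 then u 0 c else u 0 c + t r * (u r c - u 0 c)))
     = det (affine_mat (Suc m) u) * (\<Prod>r\<in>{1..m}. t r)"
proof -
  define M where "M = affine_mat (Suc m) u"
  \<comment> \<open>Left multiplication by \<open>E\<close> replaces row \<open>r \<ge> 1\<close> by \<open>(1 - t r) \<cdot> row 0 + t r \<cdot> row r\<close>.\<close>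
  define E :: "real mat" where "E = mat (Suc m) (Suc m) (\<lambda>(r, l).
     (if l = 0 then (if r = 0 then 1 else 1 - t r) else 0) + (if l = r \<and> r \<noteq> 0 then t r else 0))"
  have "E * M = affine_mat (Suc m) (\<lambda>r c. if r = 0 then u 0 c else u 0 c + t r * (u r c - u 0 c))"
  proof (rule eq_matI)
    fix r c assume "r < dim_row (affine_mat (Suc m) (\<lambda>r c. if r = 0 then u 0 c else u 0 c + t r * (u r c - u 0 c)))"
      and "c < dim_col (affine_mat (Suc m) (\<lambda>r c. if r = 0 then u 0 c else u 0 c + t r * (u r c - u 0 c)))"
    then have r: "r < Suc m" and c: "c < Suc m" by simp_all
    have "(E * M) $$ (r, c) = (\<Sum>l<Suc m. E $$ (r, l) * M $$ (l, c))"
      using r c by (auto simp: E_def M_def scalar_prod_def atLeast0LessThan intro!: sum.cong)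
    also have "\<dots> = (\<Sum>l<Suc m. (if l = 0 then (if r = 0 then 1 else 1 - t r) * M $$ (0, c) else 0)
                                + (if l = r \<and> r \<noteq> 0 then t r * M $$ (r, c) else 0))"
      using r by (intro sum.cong) (auto simp: E_def algebra_simps)
    also have "\<dots> = (if r = 0 then 1 else 1 - t r) * M $$ (0, c) + (if r \<noteq> 0 then t r * M $$ (r, c) else 0)"
      using r by (simp add: sum.distrib)
    finally show "(E * M) $$ (r, c)
        = affine_mat (Suc m) (\<lambda>r c. if r = 0 then u 0 c else u 0 c + t r * (u r c - u 0 c)) $$ (r, c)"
      using r c by (auto simp: M_def algebra_simps)
  qed (simp_all add: E_def M_def)
  moreover have "det E = (\<Prod>r\<in>{1..m}. t r)"
  proof -
    have "det E = (\<Prod>r\<in>{0..<Suc m}. E $$ (r, r))"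
      by (subst det_lower_triangular[of "Suc m"]) (auto simp: E_def prod_list_diag_prod)
    also have "{0..<Suc m} = insert 0 {1..m}" by auto
    finally show ?thesis by (simp add: E_def)
  qed
  moreover have "det (E * M) = det E * det M"
    by (rule det_mult[of _ "Suc m"]) (simp_all add: E_def M_def)
  ultimately show ?thesis by (simp add: M_def)
qed

lemma det_affine_mat_level:
  assumes "\<And>r. r \<in> {1..m} \<Longrightarrow> v r 1 = P" and "m \<ge> 1"
  shows "det (affine_mat (Suc m) v) = (P - v 0 1) * det (affine_mat m (\<lambda>r c. v (Suc r) (Suc c)))"
proof -
  define M where "M = addcol (- P) 1 0 (affine_mat (Suc m) v)"
  have M: "M \<in> carrier_mat (Suc m) (Suc m)" unfolding M_def by (intro carrier_matI) simp_all
  have "det M = det (affine_mat (Suc m) v)"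
    unfolding M_def using assms(2) by (intro det_addcol) auto
  have "det M = (\<Sum>r<Suc m. M $$ (r, 1) * cofactor M r 1)"
    using assms(2) by (intro laplace_expansion_column[OF M]) auto
  also have "\<dots> = (\<Sum>r<Suc m. if r = 0 then (v 0 1 - P) * cofactor M 0 1 else 0)"
    using assms by (intro sum.cong) (auto simp: M_def)
  also have "\<dots> = (P - v 0 1) * det (mat_delete M 0 1)"
    by (simp add: cofactor_def algebra_simps)
  also have "mat_delete M 0 1 = affine_mat m (\<lambda>r c. v (Suc r) (Suc c))"
    by (rule eq_matI) (auto simp: mat_delete_def M_def)
  finally show ?thesis using \<open>det M = det (affine_mat (Suc m) v)\<close> by simp
qed

lemma det_affine_mat_2: "det (affine_mat 2 u) = u 1 1 - u 0 1"
proof -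
  have "det (affine_mat (Suc 1) u) = (u 1 1 - u 0 1) * det (affine_mat 1 (\<lambda>r c. u (Suc r) (Suc c)))"
    by (rule det_affine_mat_level) auto
  then show ?thesis by (simp only: Suc_1 det_affine_mat_1 mult_1_right)
qed

text \<open>The point where the segment from \<open>a\<close> to \<open>b\<close> meets the hyperplane of points with first
  coordinate \<open>P\<close>, with that first coordinate dropped (coordinate \<open>c\<close> of the result is
  coordinate \<open>Suc c\<close> of the point).\<close>

definition section_point :: "real \<Rightarrow> (nat \<Rightarrow> real) \<Rightarrow> (nat \<Rightarrow> real) \<Rightarrow> nat \<Rightarrow> real" where
  "section_point P a b c = a (Suc c) + (P - a 1) / (b 1 - a 1) * (b (Suc c) - a (Suc c))"

lemma det_affine_mat_section:
  assumes "m \<ge> 1" and "\<And>r. r \<in> {1..m} \<Longrightarrow> u r 1 \<noteq> u 0 1"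
  shows "det (affine_mat (Suc m) u) * (\<Prod>r\<in>{1..m}. (P - u 0 1) / (u r 1 - u 0 1))
    = (P - u 0 1) * det (affine_mat m (\<lambda>r. section_point P (u 0) (u (Suc r))))"
proof -
  define t where "t r = (P - u 0 1) / (u r 1 - u 0 1)" for r
  define v where "v r c = (if r = 0 then u 0 c else u 0 c + t r * (u r c - u 0 c))" for r c
  have "v r 1 = P" if "r \<in> {1..m}" for r
    using assms(2)[OF that] that by (simp add: v_def t_def)
  then have "det (affine_mat (Suc m) v) = (P - v 0 1) * det (affine_mat m (\<lambda>r c. v (Suc r) (Suc c)))"
    using assms(1) by (rule det_affine_mat_level)
  moreover have "det (affine_mat (Suc m) v) = det (affine_mat (Suc m) u) * (\<Prod>r\<in>{1..m}. t r)"
    unfolding v_def by (rule det_affine_mat_scale_rows)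
  moreover have "(\<lambda>r c. v (Suc r) (Suc c)) = (\<lambda>r. section_point P (u 0) (u (Suc r)))"
    by (simp add: fun_eq_iff v_def t_def section_point_def)
  ultimately show ?thesis by (simp add: t_def v_def)
qed

lemma det_Y_mat_1: "det (Y_mat x \<sigma> 1) = 1"
  using det_affine_mat_1 by (simp add: Y_mat_eq_affine_mat)

lemma det_Y_mat_2: "det (Y_mat x \<sigma> 2) = x (\<sigma> 2) 1 - x (\<sigma> 1) 1"
proof -
  have "Y_mat x \<sigma> 2 = affine_mat 2 (\<lambda>r. x (\<sigma> (Suc r)))"
    by (rule Y_mat_eq_affine_mat)
  then show ?thesis using det_affine_mat_2[of "\<lambda>r. x (\<sigma> (Suc r))"] by (simp add: numeral_2_eq_2)
qed

lemma det_X_mat_1: "det (X_mat d x \<sigma> 1) = x (Suc d) 1 - x (\<sigma> 1) 1"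
proof -
  have "X_mat d x \<sigma> 1 = affine_mat 2 (\<lambda>r. if r < 1 then x (\<sigma> (Suc r)) else x (Suc d))"
    using X_mat_eq_affine_mat[of d x \<sigma> 1] by (simp add: numeral_2_eq_2)
  then show ?thesis
    using det_affine_mat_2[of "\<lambda>r. if r < 1 then x (\<sigma> (Suc r)) else x (Suc d)"] by simp
qed

lemma det_affine_mat_nonzero:
  assumes inj: "inj_on l {0..<m}" and indep: "aff_indep_fam (m - 1) (l ` {0..<m}) x" and "m \<ge> 1"
  shows "det (affine_mat m (\<lambda>r. x (l r))) \<noteq> 0"
proof
  define A where "A = affine_mat m (\<lambda>r. x (l r))"
  assume "det (affine_mat m (\<lambda>r. x (l r))) = 0"
  then have "det (transpose_mat A) = 0" using det_transpose[of A m] by (simp add: A_def)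
  then obtain v where v: "v \<in> carrier_vec m" "v \<noteq> 0\<^sub>v m" "transpose_mat A *\<^sub>v v = 0\<^sub>v m"
    using det_0_iff_vec_prod_zero[of "transpose_mat A" m] by (auto simp: A_def)
  have col: "(\<Sum>r\<in>{0..<m}. v $ r * (if c = 0 then 1 else x (l r) c)) = 0" if "c < m" for c
  proof -
    have "(transpose_mat A *\<^sub>v v) $ c = (\<Sum>r\<in>{0..<m}. v $ r * (if c = 0 then 1 else x (l r) c))"
      using that v(1) by (auto simp: A_def scalar_prod_def mult.commute intro!: sum.cong)
    then show ?thesis using v(3) that by simp
  qed
  define w where "w j = v $ (inv_into {0..<m} l j)" for j
  have w_l: "w (l r) = v $ r" if "r < m" for r
    using inv_into_f_f[OF inj] that by (simp add: w_def)
  have "(\<Sum>j\<in>l ` {0..<m}. w j) = 0"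
    using col[of 0] \<open>m \<ge> 1\<close> by (simp add: sum.reindex[OF inj] w_l)
  moreover have "(\<Sum>j\<in>l ` {0..<m}. w j * x j c) = 0" if "c \<in> {1..m - 1}" for c
  proof -
    have "c < m" "c \<noteq> 0" using that \<open>m \<ge> 1\<close> by auto
    then show ?thesis using col[of c] by (simp add: sum.reindex[OF inj] w_l)
  qed
  ultimately have "\<forall>j\<in>l ` {0..<m}. w j = 0"
    using indep unfolding aff_indep_fam_def by blast
  then have "v = 0\<^sub>v m"
    using v(1) w_l by (intro eq_vecI) auto
  with v(2) show False by simp
qed

lemma det_X_mat_permutes:
  assumes \<sigma>: "\<sigma> permutes {1..d}"
  shows "det (X_mat d x \<sigma> d) = of_int (sign \<sigma>) * det (X_mat d x id d)"
proof -
  have bij: "bij_betw (\<lambda>m. m - 1) {1..d} {0..<d}"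
    by (rule bij_betwI[where g = Suc]) auto
  define p where "p = map_permutation {1..d} (\<lambda>m. m - 1) \<sigma>"
  have "p permutes {0..<d}"
    unfolding p_def by (rule map_permutation_permutes[OF bij \<sigma>])
  then have p: "p permutes {0..<Suc d}" by (rule permutes_subset) auto
  have "p r = \<sigma> (Suc r) - 1" if "r < d" for r
    using map_permutation_apply[OF bij_betw_imp_inj_on[OF bij], of "Suc r" \<sigma>] that by (simp add: p_def)
  moreover have "Suc (\<sigma> (Suc r) - 1) = \<sigma> (Suc r) \<and> \<sigma> (Suc r) - 1 < d" if "r < d" for r
    using permutes_in_image[OF \<sigma>, of "Suc r"] that by auto
  moreover have "p d = d"
    using permutes_not_in[OF \<open>p permutes {0..<d}\<close>] by simp
  ultimately have "X_mat d x \<sigma> d = mat (Suc d) (Suc d) (\<lambda>(r, c). X_mat d x id d $$ (p r, c))"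
    by (intro eq_matI) (auto simp: X_mat_eq_affine_mat less_Suc_eq)
  also have "det \<dots> = of_int (sign p) * det (X_mat d x id d)"
    by (rule det_permute_rows[OF _ p]) (simp add: X_mat_eq_affine_mat)
  also have "sign p = sign \<sigma>"
    unfolding p_def using bij \<sigma> by (intro sign_map_permutation) (auto simp: bij_betw_def)
  finally show ?thesis .
qed

section \<open>Permutations with a prescribed first value\<close>

text \<open>\<open>pivot_perm n i s\<close> sends \<open>1\<close> to \<open>i\<close> and \<open>r + 1\<close> to \<open>skip i (s r)\<close>: the vertices other than
  \<open>i\<close>, listed in increasing order by \<open>skip i\<close>, are permuted by \<open>s\<close>.\<close>

definition skip :: "nat \<Rightarrow> nat \<Rightarrow> nat" where
  "skip i m = (if m < i then m else Suc m)"

definition pivot_cycle :: "nat \<Rightarrow> nat \<Rightarrow> nat" where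
  "pivot_cycle i m = (if m = 1 then i else if 2 \<le> m \<and> m \<le> i then m - 1 else m)"

definition pivot_perm :: "nat \<Rightarrow> nat \<Rightarrow> (nat \<Rightarrow> nat) \<Rightarrow> nat \<Rightarrow> nat" where
  "pivot_perm n i s = pivot_cycle i \<circ> map_permutation {1..n} Suc s"

definition unpivot :: "nat \<Rightarrow> (nat \<Rightarrow> nat) \<Rightarrow> nat \<Rightarrow> nat" where
  "unpivot n \<sigma> = map_permutation {2..Suc n} (\<lambda>m. m - 1) (Hilbert_Choice.inv (pivot_cycle (\<sigma> 1)) \<circ> \<sigma>)"

lemma skip_image:
  assumes "i \<in> {1..Suc n}"
  shows "skip i ` {1..n} = {1..Suc n} - {i}"
proof
  show "skip i ` {1..n} \<subseteq> {1..Suc n} - {i}" by (auto simp: skip_def)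
  show "{1..Suc n} - {i} \<subseteq> skip i ` {1..n}"
  proof
    fix j assume "j \<in> {1..Suc n} - {i}"
    then have "skip i (if j < i then j else j - 1) = j" "(if j < i then j else j - 1) \<in> {1..n}"
      using assms by (auto simp: skip_def)
    then show "j \<in> skip i ` {1..n}" by (metis image_eqI)
  qed
qed

lemma inj_on_skip: "inj_on (skip i) A"
  by (auto simp: skip_def inj_on_def split: if_splits)

lemma pivot_cycle_permutes:
  assumes "i \<in> {1..N}"
  shows "pivot_cycle i permutes {1..N}"
proof -
  have "pivot_cycle i permutes {1..i}"
  proof (rule bij_imp_permutes)
    show "bij_betw (pivot_cycle i) {1..i} {1..i}"
      by (rule bij_betwI[where g = "\<lambda>m. if m = i then 1 else Suc m"])
         (use assms in \<open>auto simp: pivot_cycle_def\<close>)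
  qed (use assms in \<open>auto simp: pivot_cycle_def\<close>)
  then show ?thesis by (rule permutes_subset) (use assms in auto)
qed

lemma bij_betw_Suc_interval: "bij_betw Suc {1..n} {2..Suc n}"
  by (rule bij_betwI[where g = "\<lambda>m. m - 1"]) auto

context
  fixes n i :: nat and s :: "nat \<Rightarrow> nat"
  assumes i: "i \<in> {1..Suc n}" and s: "s permutes {1..n}"
begin

lemma map_permutation_Suc_permutes: "map_permutation {1..n} Suc s permutes {2..Suc n}"
  by (rule map_permutation_permutes[OF bij_betw_Suc_interval s])

lemma pivot_perm_permutes: "pivot_perm n i s permutes {1..Suc n}"
  unfolding pivot_perm_def
proof (rule permutes_compose)
  show "map_permutation {1..n} Suc s permutes {1..Suc n}"
    by (rule permutes_subset[OF map_permutation_Suc_permutes]) auto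
  show "pivot_cycle i permutes {1..Suc n}"
    by (rule pivot_cycle_permutes[OF i])
qed

lemma pivot_perm_1: "pivot_perm n i s 1 = i"
  using permutes_not_in[OF map_permutation_Suc_permutes, of 1]
  by (simp add: pivot_perm_def pivot_cycle_def)

lemma pivot_perm_Suc:
  assumes "r \<in> {1..n}"
  shows "pivot_perm n i s (Suc r) = skip i (s r)"
proof -
  have "map_permutation {1..n} Suc s (Suc r) = Suc (s r)"
    using assms by (intro map_permutation_apply) auto
  moreover have "s r \<in> {1..n}"
    using permutes_in_image[OF s] assms by simp
  ultimately show ?thesis
    by (auto simp: pivot_perm_def pivot_cycle_def skip_def)
qed

lemma sign_pivot_perm: "sign (pivot_perm n i s) = sign (pivot_cycle i) * sign s"
proof -
  have "sign (pivot_perm n i s) = sign (pivot_cycle i) * sign (map_permutation {1..n} Suc s)"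
    unfolding pivot_perm_def
    by (intro sign_compose permutes_imp_permutation[OF _ pivot_cycle_permutes[OF i]]
        permutes_imp_permutation[OF _ map_permutation_Suc_permutes]) auto
  also have "sign (map_permutation {1..n} Suc s) = sign s"
    using s by (intro sign_map_permutation) auto
  finally show ?thesis .
qed

lemma unpivot_pivot_perm: "unpivot n (pivot_perm n i s) = s"
proof -
  have "Hilbert_Choice.inv (pivot_cycle i) \<circ> pivot_perm n i s = map_permutation {1..n} Suc s"
    by (simp add: pivot_perm_def fun_eq_iff permutes_inverses(2)[OF pivot_cycle_permutes[OF i]])
  then show ?thesis
    unfolding unpivot_def pivot_perm_1
    using map_permutation_compose_inv[OF bij_betw_Suc_interval s, of "\<lambda>m. m - 1"] by simp
qed

end

lemma pivot_perm_id: "pivot_perm n i id = pivot_cycle i"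
  by (simp add: pivot_perm_def map_permutation_id')

lemma pivot_perm_unpivot:
  assumes \<sigma>: "\<sigma> permutes {1..Suc n}"
  shows "unpivot n \<sigma> permutes {1..n}" and "pivot_perm n (\<sigma> 1) (unpivot n \<sigma>) = \<sigma>"
proof -
  define i where "i = \<sigma> 1"
  have c: "pivot_cycle i permutes {1..Suc n}"
    using permutes_in_image[OF \<sigma>] by (intro pivot_cycle_permutes) (simp add: i_def)
  define \<tau> where "\<tau> = Hilbert_Choice.inv (pivot_cycle i) \<circ> \<sigma>"
  have \<tau>_perm: "\<tau> permutes {1..Suc n}"
    unfolding \<tau>_def by (intro permutes_compose permutes_inv c \<sigma>)
  have "\<tau> 1 = 1"
    using permutes_inverses(2)[OF c, of 1] by (simp add: \<tau>_def i_def pivot_cycle_def)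
  moreover have "{1..Suc n} - {2..Suc n} = {1 :: nat}" by auto
  ultimately have \<tau>: "\<tau> permutes {2..Suc n}"
    using permutes_superset[OF \<tau>_perm, of "{2..Suc n}"] by auto
  have bij_pred: "bij_betw (\<lambda>m. m - 1) {2..Suc n} {1..n}"
    by (rule bij_betwI[where g = Suc]) auto
  have unpivot: "unpivot n \<sigma> = map_permutation {2..Suc n} (\<lambda>m. m - 1) \<tau>"
    by (simp add: unpivot_def \<tau>_def i_def)
  show "unpivot n \<sigma> permutes {1..n}"
    unfolding unpivot by (rule map_permutation_permutes[OF bij_pred \<tau>])
  have "map_permutation {1..n} Suc (unpivot n \<sigma>) = \<tau>"
    unfolding unpivot by (rule map_permutation_compose_inv[OF bij_pred \<tau>]) auto
  then have "pivot_perm n i (unpivot n \<sigma>) = \<sigma>"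
    by (simp add: pivot_perm_def \<tau>_def fun_eq_iff permutes_inverses(1)[OF c])
  then show "pivot_perm n (\<sigma> 1) (unpivot n \<sigma>) = \<sigma>"
    by (simp only: i_def)
qed

lemma sum_permutes_pivot:
  "(\<Sum>\<sigma> | \<sigma> permutes {1..Suc n}. F \<sigma>)
     = (\<Sum>i\<in>{1..Suc n}. \<Sum>s | s permutes {1..n}. F (pivot_perm n i s))"
proof -
  have "(\<Sum>i\<in>{1..Suc n}. \<Sum>s | s permutes {1..n}. F (pivot_perm n i s))
      = (\<Sum>(i, s)\<in>{1..Suc n} \<times> {s. s permutes {1..n}}. F (pivot_perm n i s))"
    by (rule sum.cartesian_product)
  also have "\<dots> = (\<Sum>\<sigma> | \<sigma> permutes {1..Suc n}. F \<sigma>)"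
  proof (rule sum.reindex_bij_witness[where i = "\<lambda>\<sigma>. (\<sigma> 1, unpivot n \<sigma>)" and j = "\<lambda>(i, s). pivot_perm n i s"])
    fix p assume "p \<in> {1..Suc n} \<times> {s. s permutes {1..n}}"
    then obtain i s where p: "p = (i, s)" and i: "i \<in> {1..Suc n}" and s: "s permutes {1..n}" by auto
    show "(\<lambda>\<sigma>. (\<sigma> 1, unpivot n \<sigma>)) ((\<lambda>(i, s). pivot_perm n i s) p) = p"
      using pivot_perm_1[OF i s] unpivot_pivot_perm[OF i s] by (simp add: p)
    show "(\<lambda>(i, s). pivot_perm n i s) p \<in> {\<sigma>. \<sigma> permutes {1..Suc n}}"
      using pivot_perm_permutes[OF i s] by (simp add: p)
  next
    fix \<sigma> assume "\<sigma> \<in> {\<sigma>. \<sigma> permutes {1..Suc n}}"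
    then have \<sigma>: "\<sigma> permutes {1..Suc n}" by simp
    show "(\<lambda>(i, s). pivot_perm n i s) (\<sigma> 1, unpivot n \<sigma>) = \<sigma>"
      using pivot_perm_unpivot(2)[OF \<sigma>] by simp
    show "(\<sigma> 1, unpivot n \<sigma>) \<in> {1..Suc n} \<times> {s. s permutes {1..n}}"
      using permutes_in_image[OF \<sigma>, of 1] pivot_perm_unpivot(1)[OF \<sigma>] by simp
  qed auto
  finally show ?thesis ..
qed

section \<open>Slicing the simplex at the level of the last vertex\<close>

text \<open>The hypothesis that survives the induction: all determinants entering some \<open>z(\<sigma>, k)\<close> are
  nonzero, except possibly \<open>det X(\<sigma>, d)\<close>. General position implies it and, unlike general
  position, it is inherited by the sectioned simplex.\<close>

definition nondegenerate :: "nat \<Rightarrow> (nat \<Rightarrow> nat \<Rightarrow> real) \<Rightarrow> bool" where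
  "nondegenerate d x \<longleftrightarrow> (\<forall>\<sigma>. \<sigma> permutes {1..d} \<longrightarrow>
     (\<forall>k\<in>{1..d}. det (Y_mat x \<sigma> k) \<noteq> 0) \<and> (\<forall>k\<in>{1..<d}. det (X_mat d x \<sigma> k) \<noteq> 0))"

text \<open>Vertex \<open>m\<close> of the sectioned simplex is the intersection of the edge from \<open>v\<^sub>i\<close> to the
  \<open>m\<close>-th of the other vertices (\<open>v\<^sub>n\<^sub>+\<^sub>2\<close> being the last one) with the hyperplane through
  \<open>v\<^sub>n\<^sub>+\<^sub>2\<close> orthogonal to the first axis; \<open>edge_param\<close> is its parameter along that edge.\<close>

definition edge_param :: "nat \<Rightarrow> (nat \<Rightarrow> nat \<Rightarrow> real) \<Rightarrow> nat \<Rightarrow> nat \<Rightarrow> real" where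
  "edge_param n x i m = (x (Suc (Suc n)) 1 - x i 1) / (x (skip i m) 1 - x i 1)"

definition section_config :: "nat \<Rightarrow> (nat \<Rightarrow> nat \<Rightarrow> real) \<Rightarrow> nat \<Rightarrow> nat \<Rightarrow> nat \<Rightarrow> real" where
  "section_config n x i m = section_point (x (Suc (Suc n)) 1) (x i) (x (skip i m))"

text \<open>The scaling by \<open>l\<close> is needed because the inductive step applies the induction hypothesis
  at \<open>l = s / (x\<^sub>n\<^sub>+\<^sub>2\<^sub>,\<^sub>1 - x\<^sub>i\<^sub>,\<^sub>1)\<close>, where \<open>s\<close> is the outermost summation variable.\<close>

definition signed_g_sum :: "nat \<Rightarrow> (nat \<Rightarrow> nat \<Rightarrow> real) \<Rightarrow> real \<Rightarrow> real" where
  "signed_g_sum d x l = (\<Sum>\<sigma> | \<sigma> permutes {1..d}. of_int (sign \<sigma>) * g_fun d (\<lambda>k. l * z_val d x \<sigma> k))"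

locale pivot_vertex =
  fixes n :: nat and x :: "nat \<Rightarrow> nat \<Rightarrow> real" and i :: nat
  assumes n_ge_1: "n \<ge> 1" and pivot_in: "i \<in> {1..Suc n}" and nondeg: "nondegenerate (Suc n) x"
begin

abbreviation gap :: real where
  "gap \<equiv> x (Suc (Suc n)) 1 - x i 1"

lemma skip_last: "skip i (Suc n) = Suc (Suc n)"
  using pivot_in by (simp add: skip_def)

lemma first_coord_skip_neq:
  assumes "m \<in> {1..Suc n}"
  shows "x (skip i m) 1 \<noteq> x i 1"
proof (cases "m = Suc n")
  case True
  define \<sigma> where "\<sigma> = pivot_perm n i id"
  have "\<sigma> permutes {1..Suc n}" "\<sigma> 1 = i"
    unfolding \<sigma>_def using pivot_perm_permutes pivot_perm_1 pivot_in permutes_id by blast+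
  then have "det (X_mat (Suc n) x \<sigma> 1) \<noteq> 0"
    using nondeg n_ge_1 by (auto simp: nondegenerate_def)
  moreover have "det (X_mat (Suc n) x \<sigma> 1) = x (Suc (Suc n)) 1 - x i 1"
    using det_X_mat_1[of "Suc n" x \<sigma>] \<open>\<sigma> 1 = i\<close> by simp
  ultimately show ?thesis using True skip_last by simp
next
  case False
  then have m: "m \<in> {1..n}" using assms by auto
  define \<sigma> where "\<sigma> = pivot_perm n i (Transposition.transpose 1 m)"
  have s: "Transposition.transpose 1 m permutes {1..n}"
    using m by (intro permutes_swap_id) auto
  have "\<sigma> permutes {1..Suc n}" "\<sigma> 1 = i"
    unfolding \<sigma>_def by (rule pivot_perm_permutes[OF pivot_in s], rule pivot_perm_1[OF pivot_in s])
  have "\<sigma> 2 = skip i m"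
    using pivot_perm_Suc[OF pivot_in s, of 1] n_ge_1 by (simp add: \<sigma>_def numeral_2_eq_2)
  then have "det (Y_mat x \<sigma> 2) \<noteq> 0"
    using nondeg n_ge_1 \<open>\<sigma> permutes {1..Suc n}\<close> by (auto simp: nondegenerate_def)
  moreover have "det (Y_mat x \<sigma> 2) = x (skip i m) 1 - x i 1"
    using det_Y_mat_2[of x \<sigma>] \<open>\<sigma> 1 = i\<close> \<open>\<sigma> 2 = skip i m\<close> by simp
  ultimately show ?thesis by simp
qed

lemma first_coord_neq:
  assumes "j \<in> {1..Suc n}" "j \<noteq> i"
  shows "x j 1 \<noteq> x i 1"
proof -
  have "j \<in> skip i ` {1..n}" using assms skip_image[OF pivot_in] by simp
  then obtain m where "m \<in> {1..n}" "j = skip i m" by (rule imageE)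
  then show ?thesis using first_coord_skip_neq[of m] by simp
qed

lemma gap_nonzero: "gap \<noteq> 0"
  using first_coord_skip_neq[of "Suc n"] skip_last by simp

lemma edge_param_last: "edge_param n x i (Suc n) = 1"
  using gap_nonzero by (simp add: edge_param_def skip_last)

lemma edge_param_nonzero: "m \<in> {1..Suc n} \<Longrightarrow> edge_param n x i m \<noteq> 0"
  using gap_nonzero first_coord_skip_neq by (simp add: edge_param_def)

lemma det_section_rows:
  assumes "m \<ge> 1" and w: "\<And>r. r < m \<Longrightarrow> w r \<in> {1..Suc n}"
  shows "det (affine_mat (Suc m) (\<lambda>r. if r = 0 then x i else x (skip i (w (r - 1)))))
           * (\<Prod>r<m. edge_param n x i (w r))
         = gap * det (affine_mat m (\<lambda>r. section_config n x i (w r)))"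
proof -
  define u where "u r = (if r = 0 then x i else x (skip i (w (r - 1))))" for r
  have "u r 1 \<noteq> u 0 1" if "r \<in> {1..m}" for r
  proof -
    have "r - 1 < m" "r \<noteq> 0" using that by auto
    then show ?thesis using first_coord_skip_neq[OF w] by (simp add: u_def)
  qed
  then have "det (affine_mat (Suc m) u) * (\<Prod>r\<in>{1..m}. (x (Suc (Suc n)) 1 - u 0 1) / (u r 1 - u 0 1))
      = (x (Suc (Suc n)) 1 - u 0 1) * det (affine_mat m (\<lambda>r. section_point (x (Suc (Suc n)) 1) (u 0) (u (Suc r))))"
    using assms(1) by (intro det_affine_mat_section) auto
  then show ?thesis
    by (simp add: u_def[abs_def] prod.atLeast1_atMost_eq edge_param_def section_config_def)
qed

context
  fixes s :: "nat \<Rightarrow> nat" and k :: nat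
  assumes s: "s permutes {1..n}" and k: "k \<in> {1..n}"
begin

abbreviation edge_prod :: real where
  "edge_prod \<equiv> \<Prod>r<k. edge_param n x i (s (Suc r))"

lemma s_Suc_in: "r < k \<Longrightarrow> s (Suc r) \<in> {1..Suc n}"
  using permutes_in_image[OF s, of "Suc r"] k by auto

lemma edge_prod_nonzero: "edge_prod \<noteq> 0"
  using edge_param_nonzero s_Suc_in by simp

lemma pivot_perm_Suc_rows: "r \<le> k \<Longrightarrow> pivot_perm n i s (Suc r) = (if r = 0 then i else skip i (s r))"
  using pivot_perm_1[OF pivot_in s] pivot_perm_Suc[OF pivot_in s, of r] k by auto

lemma det_X_mat_pivot:
  "det (X_mat (Suc n) x (pivot_perm n i s) (Suc k)) * edge_prod = gap * det (X_mat n (section_config n x i) s k)"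
proof -
  define w where "w r = (if r < k then s (Suc r) else Suc n)" for r
  have "det (affine_mat (Suc (Suc k)) (\<lambda>r. if r = 0 then x i else x (skip i (w (r - 1)))))
          * (\<Prod>r<Suc k. edge_param n x i (w r))
        = gap * det (affine_mat (Suc k) (\<lambda>r. section_config n x i (w r)))"
    using s_Suc_in by (intro det_section_rows) (auto simp: w_def)
  moreover have "X_mat (Suc n) x (pivot_perm n i s) (Suc k)
      = affine_mat (Suc (Suc k)) (\<lambda>r. if r = 0 then x i else x (skip i (w (r - 1))))"
    unfolding X_mat_eq_affine_mat
    by (rule arg_cong[where f = "affine_mat _"]) (auto simp: fun_eq_iff w_def pivot_perm_Suc_rows skip_last)
  moreover have "(\<Prod>r<Suc k. edge_param n x i (w r)) = edge_prod"
    by (simp add: w_def edge_param_last)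
  moreover have "X_mat n (section_config n x i) s k = affine_mat (Suc k) (\<lambda>r. section_config n x i (w r))"
    by (auto simp: X_mat_eq_affine_mat w_def fun_eq_iff intro!: arg_cong[where f = "affine_mat _"])
  ultimately show ?thesis by simp
qed

lemma det_Y_mat_pivot:
  "det (Y_mat x (pivot_perm n i s) (Suc k)) * edge_prod = gap * det (Y_mat (section_config n x i) s k)"
proof -
  have "det (affine_mat (Suc k) (\<lambda>r. if r = 0 then x i else x (skip i (s (Suc (r - 1))))))
          * edge_prod = gap * det (affine_mat k (\<lambda>r. section_config n x i (s (Suc r))))"
    using s_Suc_in k by (intro det_section_rows) auto
  moreover have "Y_mat x (pivot_perm n i s) (Suc k)
      = affine_mat (Suc k) (\<lambda>r. if r = 0 then x i else x (skip i (s (Suc (r - 1)))))"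
    by (rule eq_matI) (auto simp: Y_mat_eq_affine_mat pivot_perm_Suc_rows)
  ultimately show ?thesis by (simp add: Y_mat_eq_affine_mat)
qed

lemma z_val_pivot_Suc: "z_val (Suc n) x (pivot_perm n i s) (Suc k) = z_val n (section_config n x i) s k"
proof -
  have "z_val (Suc n) x (pivot_perm n i s) (Suc k)
      = (det (X_mat (Suc n) x (pivot_perm n i s) (Suc k)) * edge_prod)
        / (det (Y_mat x (pivot_perm n i s) (Suc k)) * edge_prod)"
    using edge_prod_nonzero by (simp add: z_val_def)
  also have "\<dots> = (gap * det (X_mat n (section_config n x i) s k)) / (gap * det (Y_mat (section_config n x i) s k))"
    by (simp only: det_X_mat_pivot det_Y_mat_pivot)
  finally show ?thesis using gap_nonzero by (simp add: z_val_def)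
qed

end

lemma z_val_pivot_1:
  assumes "s permutes {1..n}"
  shows "z_val (Suc n) x (pivot_perm n i s) 1 = gap"
  using pivot_perm_1[OF pivot_in assms] det_X_mat_1[of "Suc n" x] det_Y_mat_1[of x] by (simp add: z_val_def)

lemma nondegenerate_section_config: "nondegenerate n (section_config n x i)"
  unfolding nondegenerate_def
proof (intro allI impI conjI ballI)
  fix s k assume s: "s permutes {1..n}"
  have \<sigma>: "pivot_perm n i s permutes {1..Suc n}" by (rule pivot_perm_permutes[OF pivot_in s])
  show "det (Y_mat (section_config n x i) s k) \<noteq> 0" if k: "k \<in> {1..n}"
  proof -
    have "det (Y_mat x (pivot_perm n i s) (Suc k)) \<noteq> 0"
      using nondeg \<sigma> k by (simp add: nondegenerate_def)
    then have "det (Y_mat x (pivot_perm n i s) (Suc k)) * (\<Prod>r<k. edge_param n x i (s (Suc r))) \<noteq> 0"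
      using edge_prod_nonzero[OF s k] by simp
    then show ?thesis unfolding det_Y_mat_pivot[OF s k] by simp
  qed
  show "det (X_mat n (section_config n x i) s k) \<noteq> 0" if k: "k \<in> {1..<n}"
  proof -
    have k': "k \<in> {1..n}" using k by simp
    have "det (X_mat (Suc n) x (pivot_perm n i s) (Suc k)) \<noteq> 0"
      using nondeg \<sigma> k by (simp add: nondegenerate_def)
    then have "det (X_mat (Suc n) x (pivot_perm n i s) (Suc k)) * (\<Prod>r<k. edge_param n x i (s (Suc r))) \<noteq> 0"
      using edge_prod_nonzero[OF s k'] by simp
    then show ?thesis unfolding det_X_mat_pivot[OF s k'] by simp
  qed
qed

abbreviation section_det :: real where
  "section_det \<equiv> det (X_mat n (section_config n x i) id n)"

lemma sum_sign_f_iter_pivot: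
  assumes IH: "\<And>\<mu>. \<mu> \<noteq> 0 \<Longrightarrow> signed_g_sum n (section_config n x i) \<mu> = \<mu> ^ n * section_det / fact n"
  shows "(\<Sum>s | s permutes {1..n}. smult (of_int (sign s))
            (f_iter (\<lambda>j. z_val (Suc n) x (pivot_perm n i s) (Suc j) / z_val (Suc n) x (pivot_perm n i s) j) n n))
         = monom (section_det / (gap ^ n * fact n)) n"
proof (rule poly_eqI_nonzero)
  fix t :: real assume t: "t \<noteq> 0"
  have "poly (\<Sum>s | s permutes {1..n}. smult (of_int (sign s))
            (f_iter (\<lambda>j. z_val (Suc n) x (pivot_perm n i s) (Suc j) / z_val (Suc n) x (pivot_perm n i s) j) n n)) t
      = (\<Sum>s | s permutes {1..n}. of_int (sign s) * g_fun n (\<lambda>k. t / gap * z_val n (section_config n x i) s k))"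
  proof (simp only: poly_sum poly_smult, intro sum.cong refl)
    fix s assume "s \<in> {s. s permutes {1..n}}"
    then have s: "s permutes {1..n}" by simp
    have "poly (f_iter (\<lambda>j. z_val (Suc n) x (pivot_perm n i s) (Suc j) / z_val (Suc n) x (pivot_perm n i s) j) n n) t
        = g_fun n (\<lambda>k. t / gap * z_val (Suc n) x (pivot_perm n i s) (Suc k))"
      using poly_f_iter_ratios[OF n_ge_1 t, of "z_val (Suc n) x (pivot_perm n i s)"] z_val_pivot_1[OF s]
        gap_nonzero by simp
    also have "\<dots> = g_fun n (\<lambda>k. t / gap * z_val n (section_config n x i) s k)"
      by (rule g_fun_cong) (simp add: z_val_pivot_Suc[OF s])
    finally show "of_int (sign s) * poly (f_iter (\<lambda>j. z_val (Suc n) x (pivot_perm n i s) (Suc j) / z_val (Suc n) x (pivot_perm n i s) j) n n) t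
        = of_int (sign s) * g_fun n (\<lambda>k. t / gap * z_val n (section_config n x i) s k)" by simp
  qed
  also have "\<dots> = (t / gap) ^ n * section_det / fact n"
    using IH[of "t / gap"] t gap_nonzero by (simp add: signed_g_sum_def)
  also have "\<dots> = poly (monom (section_det / (gap ^ n * fact n)) n) t"
    by (simp add: poly_monom power_divide)
  finally show "poly (\<Sum>s | s permutes {1..n}. smult (of_int (sign s))
            (f_iter (\<lambda>j. z_val (Suc n) x (pivot_perm n i s) (Suc j) / z_val (Suc n) x (pivot_perm n i s) j) n n)) t
      = poly (monom (section_det / (gap ^ n * fact n)) n) t" .
qed

lemma prod_edge_param:
  "(\<Prod>r<n. edge_param n x i (Suc r)) = gap ^ n / (\<Prod>j\<in>{1..Suc n} - {i}. (x j 1 - x i 1))"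
proof -
  have "(\<Prod>r<n. edge_param n x i (Suc r)) = (\<Prod>m\<in>{1..n}. edge_param n x i m)"
    by (simp add: prod.atLeast1_atMost_eq)
  also have "\<dots> = (\<Prod>j\<in>{1..Suc n} - {i}. gap / (x j 1 - x i 1))"
    unfolding skip_image[OF pivot_in, symmetric] prod.reindex[OF inj_on_skip]
    by (simp add: edge_param_def)
  finally show ?thesis
    using pivot_in by (simp add: prod_dividef card_Diff_singleton)
qed

lemma pivot_coefficient:
  "of_int (sign (pivot_cycle i)) * (section_det / (gap ^ n * fact n))
    = det (X_mat (Suc n) x id (Suc n)) / (fact n * gap * (\<Prod>j\<in>{1..Suc n} - {i}. (x j 1 - x i 1)))"
proof -
  define \<epsilon> :: real where "\<epsilon> = of_int (sign (pivot_cycle i))"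
  define D where "D = (\<Prod>j\<in>{1..Suc n} - {i}. (x j 1 - x i 1))"
  have \<epsilon>: "\<epsilon> * \<epsilon> = 1"
    unfolding \<epsilon>_def of_int_mult[symmetric] by simp
  have D: "D \<noteq> 0"
    using first_coord_neq by (simp add: D_def)
  have "det (X_mat (Suc n) x (pivot_perm n i id) (Suc n)) * (gap ^ n / D) = gap * section_det"
    using det_X_mat_pivot[OF permutes_id, of n] n_ge_1 by (simp add: prod_edge_param D_def)
  moreover have "det (X_mat (Suc n) x (pivot_perm n i id) (Suc n)) = \<epsilon> * det (X_mat (Suc n) x id (Suc n))"
    unfolding pivot_perm_id \<epsilon>_def by (rule det_X_mat_permutes[OF pivot_cycle_permutes[OF pivot_in]])
  ultimately have "section_det = \<epsilon> * det (X_mat (Suc n) x id (Suc n)) * gap ^ n / (D * gap)"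
    using gap_nonzero D by (simp add: field_simps)
  then have "\<epsilon> * (section_det / (gap ^ n * fact n))
      = (\<epsilon> * \<epsilon>) * det (X_mat (Suc n) x id (Suc n)) * gap ^ n / (fact n * gap * D * gap ^ n)"
    by (simp add: ac_simps)
  also have "\<dots> = det (X_mat (Suc n) x id (Suc n)) / (fact n * gap * D)"
    using gap_nonzero unfolding \<epsilon> by simp
  finally show ?thesis by (simp add: \<epsilon>_def D_def)
qed

lemma sum_sign_g_fun_pivot:
  assumes IH: "\<And>\<mu>. \<mu> \<noteq> 0 \<Longrightarrow> signed_g_sum n (section_config n x i) \<mu> = \<mu> ^ n * section_det / fact n"
    and l: "l \<noteq> 0"
  shows "(\<Sum>s | s permutes {1..n}. of_int (sign (pivot_perm n i s)) * g_fun (Suc n) (\<lambda>k. l * z_val (Suc n) x (pivot_perm n i s) k))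
    = det (X_mat (Suc n) x id (Suc n)) / fact n
      * (poly (P_poly n) (l * gap) / (gap * (\<Prod>j\<in>{1..Suc n} - {i}. (x j 1 - x i 1))))"
proof -
  define H where "H s = f_iter (\<lambda>j. z_val (Suc n) x (pivot_perm n i s) (Suc j) / z_val (Suc n) x (pivot_perm n i s) j) n n" for s
  define U where "U = [:0, l * gap:]"
  have "(\<Sum>s | s permutes {1..n}. of_int (sign (pivot_perm n i s)) * g_fun (Suc n) (\<lambda>k. l * z_val (Suc n) x (pivot_perm n i s) k))
      = (\<Sum>s | s permutes {1..n}. of_int (sign (pivot_cycle i)) * (of_int (sign s) * poly (ext_sum (H s) U) 1))"
    using z_val_pivot_1
    by (intro sum.cong refl) (simp add: sign_pivot_perm[OF pivot_in] g_fun_Suc_scaled[OF l] H_def U_def)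
  also have "\<dots> = of_int (sign (pivot_cycle i)) * poly (ext_sum (\<Sum>s | s permutes {1..n}. smult (of_int (sign s)) (H s)) U) 1"
    by (simp add: ext_sum_sum ext_sum_smult poly_sum sum_distrib_left)
  also have "(\<Sum>s | s permutes {1..n}. smult (of_int (sign s)) (H s)) = monom (section_det / (gap ^ n * fact n)) n"
    unfolding H_def by (rule sum_sign_f_iter_pivot[OF IH])
  also have "of_int (sign (pivot_cycle i)) * poly (ext_sum (monom (section_det / (gap ^ n * fact n)) n) U) 1
      = of_int (sign (pivot_cycle i)) * (section_det / (gap ^ n * fact n)) * poly (P_poly n) (l * gap)"
    by (simp add: ext_sum_monom[OF n_ge_1] U_def poly_pcompose)
  finally show ?thesis
    by (simp only: pivot_coefficient) (simp add: field_simps)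
qed

end

lemma signed_g_sum_1: "signed_g_sum 1 x l = l * det (X_mat 1 x id 1)"
proof -
  have "{\<sigma>. \<sigma> permutes {1..1 :: nat}} = {id}" by auto
  then have "signed_g_sum 1 x l = g_fun 1 (\<lambda>k. l * z_val 1 x id k)"
    by (simp add: signed_g_sum_def)
  also have "\<dots> = l * z_val 1 x id 1"
    by (simp add: g_fun_def f_fun_def ext_sum_def)
  finally show ?thesis
    using det_Y_mat_1[of x id] by (simp add: z_val_def)
qed

lemma signed_g_sum_Suc:
  assumes n: "n \<ge> 1" and nondeg: "nondegenerate (Suc n) x" and l: "l \<noteq> 0"
    and IH: "\<And>y \<mu>. nondegenerate n y \<Longrightarrow> \<mu> \<noteq> 0 \<Longrightarrow> signed_g_sum n y \<mu> = \<mu> ^ n * det (X_mat n y id n) / fact n"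
  shows "signed_g_sum (Suc n) x l = l ^ Suc n * det (X_mat (Suc n) x id (Suc n)) / fact (Suc n)"
proof -
  define W where "W j = x (Suc (Suc n)) 1 - x j 1" for j
  have pivot: "pivot_vertex n x i" if "i \<in> {1..Suc n}" for i
    using n that nondeg by unfold_locales
  have W_nz: "W i \<noteq> 0" if "i \<in> {1..Suc n}" for i
    using pivot_vertex.gap_nonzero[OF pivot[OF that]] by (simp add: W_def)
  have "inj_on W {1..Suc n}"
    using pivot_vertex.first_coord_neq[OF pivot] by (fastforce simp: inj_on_def W_def)
  have "signed_g_sum (Suc n) x l
      = (\<Sum>i\<in>{1..Suc n}. det (X_mat (Suc n) x id (Suc n)) / fact n
           * (poly (P_poly n) (l * W i) / (W i * (\<Prod>j\<in>{1..Suc n} - {i}. (W i - W j)))))"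
    unfolding signed_g_sum_def sum_permutes_pivot
  proof (intro sum.cong refl)
    fix i assume "i \<in> {1..Suc n}"
    then interpret pivot_vertex n x i by (rule pivot)
    show "(\<Sum>s | s permutes {1..n}. of_int (sign (pivot_perm n i s)) * g_fun (Suc n) (\<lambda>k. l * z_val (Suc n) x (pivot_perm n i s) k))
        = det (X_mat (Suc n) x id (Suc n)) / fact n
          * (poly (P_poly n) (l * W i) / (W i * (\<Prod>j\<in>{1..Suc n} - {i}. (W i - W j))))"
      using sum_sign_g_fun_pivot[OF IH[OF nondegenerate_section_config] l] by (simp add: W_def)
  qed
  also have "\<dots> = det (X_mat (Suc n) x id (Suc n)) / fact n
      * (\<Sum>i\<in>{1..Suc n}. poly (P_poly n) (l * W i) / (W i * (\<Prod>j\<in>{1..Suc n} - {i}. (W i - W j))))"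
    by (rule sum_distrib_left[symmetric])
  also have "(\<Sum>i\<in>{1..Suc n}. poly (P_poly n) (l * W i) / (W i * (\<Prod>j\<in>{1..Suc n} - {i}. (W i - W j))))
      = l ^ Suc n / Suc n"
    by (rule sum_P_poly_div_prod_diff[OF _ _ n \<open>inj_on W {1..Suc n}\<close> W_nz]) simp_all
  finally show ?thesis by (simp add: field_simps id_def)
qed

lemma signed_g_sum_eq:
  assumes "d \<ge> 1" and "nondegenerate d x" and "l \<noteq> 0"
  shows "signed_g_sum d x l = l ^ d * det (X_mat d x id d) / fact d"
  using assms
proof (induction d arbitrary: x l rule: nat_induct_at_least)
  case base
  then show ?case using signed_g_sum_1[of x l] by (simp add: id_def)
next
  case (Suc n)
  then show ?case by (intro signed_g_sum_Suc) (simp_all add: id_def)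
qed

lemma general_position_det_affine_mat_nonzero:
  assumes gp: "general_position d x" and "m < d" and inj: "inj_on l {0..<Suc m}"
    and l: "\<And>r. r < Suc m \<Longrightarrow> l r \<in> {1..d + 1}"
  shows "det (affine_mat (Suc m) (\<lambda>r. x (l r))) \<noteq> 0"
proof -
  have "l ` {0..<Suc m} \<subseteq> {1..d + 1}" "card (l ` {0..<Suc m}) = m + 1"
    using l inj by (auto simp: card_image)
  then have "aff_indep_fam m (l ` {0..<Suc m}) x"
    using gp \<open>m < d\<close> unfolding general_position_def by blast
  then show ?thesis using det_affine_mat_nonzero[OF inj] by simp
qed

lemma general_position_imp_nondegenerate:
  assumes gp: "general_position d x"
  shows "nondegenerate d x"
  unfolding nondegenerate_def
proof (intro allI impI conjI ballI)
  fix \<sigma> k assume \<sigma>: "\<sigma> permutes {1..d}"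
  have \<sigma>_in: "\<sigma> (Suc r) \<in> {1..d}" if "r < d" for r
    using permutes_in_image[OF \<sigma>] that by simp
  show "det (Y_mat x \<sigma> k) \<noteq> 0" if k: "k \<in> {1..d}"
  proof -
    have "inj_on (\<lambda>r. \<sigma> (Suc r)) {0..<Suc (k - 1)}"
      using permutes_inj[OF \<sigma>] by (auto simp: inj_on_def inj_def)
    moreover have "\<sigma> (Suc r) \<in> {1..d + 1}" if "r < Suc (k - 1)" for r
      using \<sigma>_in[of r] that k by auto
    ultimately have "det (affine_mat (Suc (k - 1)) (\<lambda>r. x (\<sigma> (Suc r)))) \<noteq> 0"
      using k by (intro general_position_det_affine_mat_nonzero[OF gp]) auto
    then show ?thesis using k by (simp add: Y_mat_eq_affine_mat)
  qed
  show "det (X_mat d x \<sigma> k) \<noteq> 0" if k: "k \<in> {1..<d}"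
  proof -
    define l where "l r = (if r < k then \<sigma> (Suc r) else Suc d)" for r
    have \<sigma>_ne: "\<sigma> (Suc r) \<noteq> Suc d" if "r < k" for r
      using \<sigma>_in[of r] that k by auto
    have "inj_on l {0..<Suc k}"
    proof (rule inj_onI)
      fix a b assume "a \<in> {0..<Suc k}" "b \<in> {0..<Suc k}" "l a = l b"
      then show "a = b"
        using \<sigma>_ne[of a] \<sigma>_ne[of b] permutes_inj[OF \<sigma>] by (auto simp: l_def inj_def split: if_splits)
    qed
    moreover have "l r \<in> {1..d + 1}" if "r < Suc k" for r
      using \<sigma>_in[of r] that k by (auto simp: l_def)
    ultimately have "det (affine_mat (Suc k) (\<lambda>r. x (l r))) \<noteq> 0"
      using k by (intro general_position_det_affine_mat_nonzero[OF gp]) auto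
    moreover have "affine_mat (Suc k) (\<lambda>r. x (l r)) = X_mat d x \<sigma> k"
      by (simp add: X_mat_eq_affine_mat l_def if_distrib)
    ultimately show ?thesis by simp
  qed
qed

theorem mainTheorem14:
  fixes d :: nat and x :: "nat \<Rightarrow> nat \<Rightarrow> real"
  assumes "d \<ge> 1"
    and "aff_indep_fam d {1..d+1} x"
    and "general_position d x"
  shows "(\<Sum>\<sigma> | \<sigma> permutes {1..d}. real_of_int (sign \<sigma>) * g_fun d (z_val d x \<sigma>))
           = det (X_mat d x id d) / fact d"
proof -
  have "nondegenerate d x"
    by (rule general_position_imp_nondegenerate[OF assms(3)])
  then have "signed_g_sum d x 1 = 1 ^ d * det (X_mat d x id d) / fact d"
    by (rule signed_g_sum_eq[OF assms(1) _ one_neq_zero])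
  then show ?thesis by (simp add: signed_g_sum_def)
qed

end
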